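(* For every fixed nonnegative integer $k$, \[ \lim_{n\to\infty}\frac{\gamma_{2t}(K_n\Box K_{n+k})}{n}=\frac32. \]
   Context: For a graph $G=(V,E)$, a set $S\subseteq V$ is a total $2$-dominating set if every vertex of $V$ (including those in $S$) is adjacent to at least $2$ vertices of $S$; $\gamma_{2t}(G)$ is the minimum cardinality of such a set. $G\Box H$ denotes the Cartesian product: vertex set $V(G)\times V(H)$, with $(u_1,v_1)\sim(u_2,v_2)$ iff either $u_1=u_2$ and $v_1\sim v_2$, or $v_1=v_2$ and $u_1\sim u_2$. $K_n$ is the complete graph on $n$ vertices. *)

theory Defs
  imports "HOL-Analysis.Analysis"
begin

text \<open>A (simple) graph is given by a vertex set V and a symmetric irreflexive adjacency relation E.\<close>

definition total_k_dominating :: "nat \<Rightarrow> 'a set \<Rightarrow> ('a \<Rightarrow> 'a \<Rightarrow> bool) \<Rightarrow> 'a set \<Rightarrow> bool" where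
  "total_k_dominating k V E S \<longleftrightarrow>
     S \<subseteq> V \<and> (\<forall>v\<in>V. card {u\<in>S. E v u} \<ge> k)"

definition gamma_kt :: "nat \<Rightarrow> 'a set \<Rightarrow> ('a \<Rightarrow> 'a \<Rightarrow> bool) \<Rightarrow> nat" where
  "gamma_kt k V E = (LEAST m. \<exists>S. finite S \<and> total_k_dominating k V E S \<and> card S = m)"

definition K_verts :: "nat \<Rightarrow> nat set" where "K_verts n = {..<n}"
definition K_adj :: "nat \<Rightarrow> nat \<Rightarrow> bool" where "K_adj u v \<longleftrightarrow> u \<noteq> v"

definition cart_verts :: "'a set \<Rightarrow> 'b set \<Rightarrow> ('a \<times> 'b) set" where
  "cart_verts V W = V \<times> W"
definition cart_adj :: "('a \<Rightarrow> 'a \<Rightarrow> bool) \<Rightarrow> ('b \<Rightarrow> 'b \<Rightarrow> bool) \<Rightarrow> 'a \<times> 'b \<Rightarrow> 'a \<times> 'b \<Rightarrow> bool" where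
  "cart_adj E F x y \<longleftrightarrow> (fst x = fst y \<and> F (snd x) (snd y)) \<or> (snd x = snd y \<and> E (fst x) (fst y))"

end

theory Submission
  imports Defs
begin

text \<open>\<open>K\<^sub>n \<box> K\<^sub>m\<close> is the rook's graph on the \<open>n \<times> m\<close> board: two cells are adjacent iff
  they are distinct and share a row or a column. If \<open>S\<close> is total 2-dominating with row and
  column counts \<open>r\<close> and \<open>c\<close>, the cell \<open>(i, j)\<close> sees \<open>r i + c j - 2 [(i, j) \<in> S]\<close> cells of \<open>S\<close>.
  If some row misses \<open>S\<close>, every column holds two cells of \<open>S\<close>, and symmetrically. Otherwise
  every \<open>u \<in> S\<close> has \<open>r + c \<ge> 4\<close> with \<open>r, c \<ge> 1\<close>, so \<open>1/r + 1/c \<le> 4/3\<close>; summing these weights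
  over \<open>S\<close> counts every row and every column exactly once, whence \<open>n + m \<le> 4 |S| / 3\<close>.
  Conversely, two triples in each diagonal \<open>4 \<times> 4\<close> block and one triple in each leftover line
  form a total 2-dominating set of size \<open>3n/2 + O(k)\<close>.\<close>

lemma cart_adj_K_adj_iff:
  "cart_adj K_adj K_adj u v \<longleftrightarrow> u \<noteq> v \<and> (fst u = fst v \<or> snd u = snd v)"
  by (auto simp: cart_adj_def K_adj_def prod_eq_iff)

lemma gamma_kt_le:
  assumes "finite S" "total_k_dominating k V E S"
  shows "gamma_kt k V E \<le> card S"
  unfolding gamma_kt_def by (rule Least_le) (use assms in blast)

lemma gamma_kt_attained:
  assumes "finite S" "total_k_dominating k V E S"
  obtains S0 where "finite S0" "total_k_dominating k V E S0" "card S0 = gamma_kt k V E"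
proof -
  have "\<exists>S0. finite S0 \<and> total_k_dominating k V E S0 \<and> card S0 = gamma_kt k V E"
    unfolding gamma_kt_def by (rule LeastI) (use assms in blast)
  with that show ?thesis by blast
qed

lemma total_k_dominating_swap:
  assumes "total_k_dominating k (cart_verts V W) (cart_adj E F) S"
  shows "total_k_dominating k (cart_verts W V) (cart_adj F E) (prod.swap ` S)"
proof -
  have "{u \<in> prod.swap ` S. cart_adj F E (prod.swap v) u} = prod.swap ` {u \<in> S. cart_adj E F v u}" for v
    by (auto simp: cart_adj_def)
  then have "card {u \<in> prod.swap ` S. cart_adj F E (prod.swap v) u} = card {u \<in> S. cart_adj E F v u}" for v
    by (simp add: card_image)
  with assms show ?thesis
    unfolding total_k_dominating_def cart_verts_def by force
qed

lemma card_neighbours_ge_clique: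
  assumes "finite S" "T \<subseteq> S" "u \<in> T" "\<And>v. v \<in> T \<Longrightarrow> v \<noteq> u \<Longrightarrow> E u v"
  shows "card T - 1 \<le> card {v \<in> S. E u v}"
proof -
  have "T - {u} \<subseteq> {v \<in> S. E u v}" using assms(2,4) by blast
  then have "card (T - {u}) \<le> card {v \<in> S. E u v}" using assms(1) by (intro card_mono) auto
  then show ?thesis using assms(3) by (simp add: card_Diff_singleton_if)
qed

lemma sum_inverse_card_fibres:
  assumes "finite S"
  shows "(\<Sum>u\<in>S. 1 / real (card {v \<in> S. f v = f u})) = real (card (f ` S))"
proof -
  have "(\<Sum>u\<in>S. 1 / real (card {v \<in> S. f v = f u}))
      = (\<Sum>y\<in>f ` S. \<Sum>u\<in>{u \<in> S. f u = y}. 1 / real (card {v \<in> S. f v = y}))"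
    by (subst sum.image_gen[OF assms, of _ f]) (rule sum.cong; simp)
  also have "\<dots> = (\<Sum>y\<in>f ` S. 1)"
    using assms by (intro sum.cong) auto
  finally show ?thesis by simp
qed

lemma card_fibre_pos:
  assumes "finite S" "u \<in> S"
  shows "0 < card {v \<in> S. f v = f u}"
  using assms by (auto simp: card_gt_0_iff)

lemma card_eq_sum_card_fibres:
  assumes "finite S" "finite T" "f ` S \<subseteq> T"
  shows "card S = (\<Sum>y\<in>T. card {x \<in> S. f x = y})"
  using sum.group[OF assms, of "\<lambda>_. 1::nat"] by (simp flip: card_eq_sum)

lemma LIMSEQ_div_of_affine_bounds:
  fixes x :: "nat \<Rightarrow> real"
  assumes "eventually (\<lambda>n. a * real n \<le> x n \<and> x n \<le> a * real n + C) sequentially"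
  shows "(\<lambda>n. x n / real n) \<longlonglongrightarrow> a"
proof (rule tendsto_sandwich)
  have bounds: "eventually (\<lambda>n. 0 < n \<and> a * real n \<le> x n \<and> x n \<le> a * real n + C) sequentially"
    using assms eventually_gt_at_top[of 0] by eventually_elim simp
  show "eventually (\<lambda>n. a \<le> x n / real n) sequentially"
    using bounds by eventually_elim (simp add: field_simps)
  show "eventually (\<lambda>n. x n / real n \<le> a + C / real n) sequentially"
    using bounds by eventually_elim (simp add: field_simps)
  show "(\<lambda>n. a) \<longlonglongrightarrow> a"
    by simp
  show "(\<lambda>n. a + C / real n) \<longlonglongrightarrow> a"
    using tendsto_add[OF tendsto_const[of a] lim_const_over_n[of C]] by simp
qed

lemma card_rook_neighbours:
  assumes "finite S"
  shows "card {u \<in> S. cart_adj K_adj K_adj v u} + (if v \<in> S then 2 else 0)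
       = card {u \<in> S. fst u = fst v} + card {u \<in> S. snd u = snd v}"
proof -
  let ?R = "{u \<in> S. fst u = fst v}" and ?C = "{u \<in> S. snd u = snd v}"
  have "{u \<in> S. cart_adj K_adj K_adj v u} = (?R - {v}) \<union> (?C - {v})"
    by (auto simp: cart_adj_K_adj_iff)
  moreover have "(?R - {v}) \<inter> (?C - {v}) = {}"
    by (auto simp: prod_eq_iff)
  ultimately have "card {u \<in> S. cart_adj K_adj K_adj v u} = card (?R - {v}) + card (?C - {v})"
    using assms by (simp add: card_Un_disjoint)
  moreover have "v \<in> S \<Longrightarrow> 0 < card ?R \<and> 0 < card ?C"
    using assms by (simp add: card_fibre_pos)
  ultimately show ?thesis
    by (cases "v \<in> S") (auto simp: card_Diff_singleton_if)
qed

lemma rook_line_counts_ge: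
  assumes "finite S" "total_k_dominating 2 (cart_verts (K_verts n) (K_verts m)) (cart_adj K_adj K_adj) S"
    and "i < n" "j < m"
  shows "2 + (if (i, j) \<in> S then 2 else 0) \<le> card {u \<in> S. fst u = i} + card {u \<in> S. snd u = j}"
proof -
  have "2 \<le> card {u \<in> S. cart_adj K_adj K_adj (i, j) u}"
    using assms(2-4) by (auto simp: total_k_dominating_def cart_verts_def K_verts_def)
  then show ?thesis
    using card_rook_neighbours[OF assms(1), of "(i, j)"] by simp
qed

lemma rook_card_ge_if_empty_row:
  assumes "finite S" "total_k_dominating 2 (cart_verts (K_verts n) (K_verts m)) (cart_adj K_adj K_adj) S"
    and "i < n" "\<forall>u \<in> S. fst u \<noteq> i"
  shows "2 * m \<le> card S"
proof -
  have "snd ` S \<subseteq> {..<m}"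
    using assms(2) by (auto simp: total_k_dominating_def cart_verts_def K_verts_def)
  then have card_S: "card S = (\<Sum>j<m. card {u \<in> S. snd u = j})"
    by (rule card_eq_sum_card_fibres[OF assms(1) finite_lessThan])
  have empty_row: "{u \<in> S. fst u = i} = {}" and "(i, j) \<notin> S" for j
    using assms(4) by auto
  then have "2 \<le> card {u \<in> S. snd u = j}" if "j < m" for j
    using rook_line_counts_ge[OF assms(1,2,3) that] unfolding empty_row by simp
  with card_S show ?thesis
    using sum_mono[of "{..<m}" "\<lambda>_. 2::nat" "\<lambda>j. card {u \<in> S. snd u = j}"] by simp
qed

lemma inverse_add_inverse_le_four_thirds:
  fixes r c :: nat
  assumes "1 \<le> r" "1 \<le> c" "4 \<le> r + c"
  shows "1 / real r + 1 / real c \<le> 4 / 3"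
proof -
  consider "r = 1" "3 \<le> c" | "r = 2" "2 \<le> c" | "3 \<le> r"
    using assms by linarith
  then show ?thesis
  proof cases
    case 1
    then have "1 / real c \<le> 1 / 3" by (simp add: field_simps)
    with 1 show ?thesis by simp
  next
    case 2
    then have "1 / real c \<le> 1 / 2" by (simp add: field_simps)
    moreover have "1 / real r = 1 / 2" using 2 by simp
    ultimately show ?thesis by linarith
  next
    case 3
    then have "1 / real r \<le> 1 / 3" by (simp add: field_simps)
    moreover have "1 / real c \<le> 1" using assms(2) by (simp add: field_simps)
    ultimately show ?thesis by simp
  qed
qed

lemma rook_card_ge_if_lines_met:
  assumes "finite S" "total_k_dominating 2 (cart_verts (K_verts n) (K_verts m)) (cart_adj K_adj K_adj) S"
    and rows: "\<forall>i < n. \<exists>u \<in> S. fst u = i" and cols: "\<forall>j < m. \<exists>u \<in> S. snd u = j"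
  shows "3 * (n + m) \<le> 4 * card S"
proof -
  define r where "r u = card {v \<in> S. fst v = fst u}" for u :: "nat \<times> nat"
  define c where "c u = card {v \<in> S. snd v = snd u}" for u :: "nat \<times> nat"
  have sub: "S \<subseteq> {..<n} \<times> {..<m}"
    using assms(2) by (auto simp: total_k_dominating_def cart_verts_def K_verts_def)
  have "fst ` S = {..<n}" "snd ` S = {..<m}"
    using sub rows cols by force+
  then have "real (n + m) = (\<Sum>u\<in>S. 1 / real (r u) + 1 / real (c u))"
    using sum_inverse_card_fibres[OF assms(1), of fst] sum_inverse_card_fibres[OF assms(1), of snd]
    by (simp add: sum.distrib r_def c_def)
  also have "\<dots> \<le> (\<Sum>u\<in>S. 4 / 3)"
  proof (rule sum_mono)
    fix u assume u: "u \<in> S"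
    have "1 \<le> r u" "1 \<le> c u"
      using card_fibre_pos[OF assms(1) u] unfolding r_def c_def by (simp_all add: Suc_le_eq)
    moreover have "4 \<le> r u + c u"
      using rook_line_counts_ge[OF assms(1,2), of "fst u" "snd u"] u sub
      unfolding r_def c_def by auto
    ultimately show "1 / real (r u) + 1 / real (c u) \<le> 4 / 3"
      by (rule inverse_add_inverse_le_four_thirds)
  qed
  finally show ?thesis by simp
qed

lemma rook_total_2_dominating_card_lower:
  assumes "finite S" "n \<le> m"
    and dom: "total_k_dominating 2 (cart_verts (K_verts n) (K_verts m)) (cart_adj K_adj K_adj) S"
  shows "3 * n \<le> 2 * card S"
proof (cases "\<forall>i < n. \<exists>u \<in> S. fst u = i")
  case rows: True
  show ?thesis
  proof (cases "\<forall>j < m. \<exists>u \<in> S. snd u = j")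
    case True
    with rook_card_ge_if_lines_met[OF assms(1) dom rows] assms(2) show ?thesis by simp
  next
    case False
    then obtain j where "j < m" "\<forall>u \<in> prod.swap ` S. fst u \<noteq> j" by auto
    with rook_card_ge_if_empty_row[OF _ total_k_dominating_swap[OF dom]] assms(1)
    have "2 * n \<le> card (prod.swap ` S)" by blast
    then show ?thesis by (simp add: card_image)
  qed
next
  case False
  then obtain i where "i < n" "\<forall>u \<in> S. fst u \<noteq> i" by auto
  with rook_card_ge_if_empty_row[OF assms(1) dom] assms(2) show ?thesis by force
qed

lemma rook_total_2_dominating_if_lines_met:
  assumes "finite S" "S \<subseteq> {..<n} \<times> {..<m}"
    and rows: "\<forall>i < n. \<exists>j. (i, j) \<in> S" and cols: "\<forall>j < m. \<exists>i. (i, j) \<in> S"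
    and nbrs: "\<forall>u \<in> S. 2 \<le> card {v \<in> S. cart_adj K_adj K_adj u v}"
  shows "total_k_dominating 2 (cart_verts (K_verts n) (K_verts m)) (cart_adj K_adj K_adj) S"
  unfolding total_k_dominating_def
proof (intro conjI ballI)
  show "S \<subseteq> cart_verts (K_verts n) (K_verts m)"
    using assms(2) by (simp add: cart_verts_def K_verts_def lessThan_def)
next
  fix v assume "v \<in> cart_verts (K_verts n) (K_verts m)"
  then obtain i j where v: "v = (i, j)" "i < n" "j < m"
    by (auto simp: cart_verts_def K_verts_def)
  show "2 \<le> card {u \<in> S. cart_adj K_adj K_adj v u}"
  proof (cases "v \<in> S")
    case True
    with nbrs show ?thesis by blast
  next
    case False
    obtain j' i' where in_S: "(i, j') \<in> S" "(i', j) \<in> S"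
      using rows cols v by blast
    with False v have "(i, j') \<noteq> (i', j)"
      by auto
    moreover have "{(i, j'), (i', j)} \<subseteq> {u \<in> S. cart_adj K_adj K_adj v u}"
      using in_S False v by (auto simp: cart_adj_K_adj_iff)
    ultimately show ?thesis
      using assms(1) card_mono[of "{u \<in> S. cart_adj K_adj K_adj v u}" "{(i, j'), (i', j)}"] by simp
  qed
qed

definition row_triple :: "nat \<Rightarrow> nat \<Rightarrow> (nat \<times> nat) set" where
  "row_triple i j = {i} \<times> {j..<j + 3}"

definition col_triple :: "nat \<Rightarrow> nat \<Rightarrow> (nat \<times> nat) set" where
  "col_triple i j = {i..<i + 3} \<times> {j}"

lemma two_neighbours_if_in_triple:
  assumes "finite S" "T \<subseteq> S" "u \<in> T" "T = row_triple i j \<or> T = col_triple i j"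
  shows "2 \<le> card {v \<in> S. cart_adj K_adj K_adj u v}"
proof -
  have "card T = 3"
    using assms(4) by (auto simp: row_triple_def col_triple_def card_cartesian_product)
  moreover have "cart_adj K_adj K_adj u v" if "v \<in> T" "v \<noteq> u" for v
    using assms(3,4) that by (auto simp: row_triple_def col_triple_def cart_adj_K_adj_iff)
  ultimately show ?thesis
    using card_neighbours_ge_clique[OF assms(1-3)] by fastforce
qed

text \<open>The block \<open>{4b..4b+3}\<^sup>2\<close> receives the triples in its last row and last column, which
  together meet all four of its rows and columns; the rows and columns beyond \<open>4q\<close> receive a
  triple each.\<close>
definition rook_cover :: "nat \<Rightarrow> nat \<Rightarrow> nat \<Rightarrow> (nat \<times> nat) set" where
  "rook_cover q n m =
     (\<Union>b<q. row_triple (4 * b + 3) (4 * b) \<union> col_triple (4 * b) (4 * b + 3))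
     \<union> (\<Union>i\<in>{4 * q..<n}. row_triple i 0) \<union> (\<Union>j\<in>{4 * q..<m}. col_triple 0 j)"

lemma card_rook_cover_le:
  "card (rook_cover q n m) \<le> 6 * q + 3 * (n - 4 * q) + 3 * (m - 4 * q)"
proof -
  have card_triples: "card (row_triple i j) = 3" "card (col_triple i j) = 3" for i j
    by (simp_all add: row_triple_def col_triple_def card_cartesian_product)
  let ?L = "\<lambda>b. row_triple (4 * b + 3) (4 * b) \<union> col_triple (4 * b) (4 * b + 3)"
  have "card (?L b) \<le> 6" for b
    using card_Un_le[of "row_triple (4 * b + 3) (4 * b)" "col_triple (4 * b) (4 * b + 3)"]
    by (simp add: card_triples)
  then have "(\<Sum>b<q. card (?L b)) \<le> 6 * q"
    using sum_mono[of "{..<q}" "\<lambda>b. card (?L b)" "\<lambda>_. 6"] by simp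
  then have "card (\<Union>b<q. ?L b) \<le> 6 * q"
    using card_UN_le[of "{..<q}" ?L] by simp
  moreover have "card (\<Union>i\<in>{4 * q..<n}. row_triple i 0) \<le> 3 * (n - 4 * q)"
    using card_UN_le[of "{4 * q..<n}" "\<lambda>i. row_triple i 0"] by (simp add: card_triples)
  moreover have "card (\<Union>j\<in>{4 * q..<m}. col_triple 0 j) \<le> 3 * (m - 4 * q)"
    using card_UN_le[of "{4 * q..<m}" "\<lambda>j. col_triple 0 j"] by (simp add: card_triples)
  ultimately show ?thesis
    unfolding rook_cover_def by (meson add_mono card_Un_le order_trans)
qed

lemma rook_cover_subset:
  assumes "4 * q \<le> n" "4 * q \<le> m" "3 \<le> n" "3 \<le> m"
  shows "rook_cover q n m \<subseteq> {..<n} \<times> {..<m}"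
proof -
  have row_sub: "row_triple i j \<subseteq> {..<n} \<times> {..<m}" if "i < n" "j + 3 \<le> m" for i j
    using that by (auto simp: row_triple_def)
  have col_sub: "col_triple i j \<subseteq> {..<n} \<times> {..<m}" if "i + 3 \<le> n" "j < m" for i j
    using that by (auto simp: col_triple_def)
  show ?thesis
    unfolding rook_cover_def
  proof (intro Un_least UN_least)
    fix b assume "b \<in> {..<q}"
    then have "4 * b + 3 < n" "4 * b + 3 < m"
      using assms(1,2) by auto
    then show "row_triple (4 * b + 3) (4 * b) \<subseteq> {..<n} \<times> {..<m}"
      and "col_triple (4 * b) (4 * b + 3) \<subseteq> {..<n} \<times> {..<m}"
      by (simp_all add: row_sub col_sub)
  next
    show "row_triple i 0 \<subseteq> {..<n} \<times> {..<m}" if "i \<in> {4 * q..<n}" for i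
      using that assms(4) by (simp add: row_sub)
    show "col_triple 0 j \<subseteq> {..<n} \<times> {..<m}" if "j \<in> {4 * q..<m}" for j
      using that assms(3) by (simp add: col_sub)
  qed
qed

lemma swap_rook_cover: "prod.swap ` rook_cover q n m = rook_cover q m n"
proof -
  have "prod.swap ` row_triple i j = col_triple j i" "prod.swap ` col_triple i j = row_triple j i" for i j
    by (auto simp: row_triple_def col_triple_def)
  then show ?thesis
    unfolding rook_cover_def by (auto simp: image_Un image_UN)
qed

lemma rook_cover_meets_rows:
  assumes "i < n"
  shows "\<exists>j. (i, j) \<in> rook_cover q n m"
proof (cases "i < 4 * q")
  case True
  define b where "b = i div 4"
  have "b < q" using True by (simp add: b_def)
  moreover have "(i, 4 * b) \<in> row_triple (4 * b + 3) (4 * b) \<or> (i, 4 * b + 3) \<in> col_triple (4 * b) (4 * b + 3)"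
    unfolding b_def row_triple_def col_triple_def by auto
  ultimately show ?thesis
    unfolding rook_cover_def by blast
next
  case False
  then have "(i, 0) \<in> row_triple i 0" "i \<in> {4 * q..<n}"
    using assms by (simp_all add: row_triple_def)
  then show ?thesis
    unfolding rook_cover_def by blast
qed

lemma rook_cover_total_2_dominating:
  assumes "4 * q \<le> n" "4 * q \<le> m" "3 \<le> n" "3 \<le> m"
  shows "total_k_dominating 2 (cart_verts (K_verts n) (K_verts m)) (cart_adj K_adj K_adj) (rook_cover q n m)"
proof (rule rook_total_2_dominating_if_lines_met)
  show fin: "finite (rook_cover q n m)"
    by (simp add: rook_cover_def row_triple_def col_triple_def)
  show "rook_cover q n m \<subseteq> {..<n} \<times> {..<m}"
    using assms by (rule rook_cover_subset)
  show "\<forall>i < n. \<exists>j. (i, j) \<in> rook_cover q n m"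
    using rook_cover_meets_rows by blast
  show "\<forall>j < m. \<exists>i. (i, j) \<in> rook_cover q n m"
  proof (intro allI impI)
    fix j assume "j < m"
    then obtain i where "(j, i) \<in> rook_cover q m n"
      using rook_cover_meets_rows by blast
    then have "prod.swap (j, i) \<in> rook_cover q n m"
      by (metis imageI swap_rook_cover)
    then show "\<exists>i. (i, j) \<in> rook_cover q n m"
      by auto
  qed
  show "\<forall>u \<in> rook_cover q n m. 2 \<le> card {v \<in> rook_cover q n m. cart_adj K_adj K_adj u v}"
  proof
    fix u assume "u \<in> rook_cover q n m"
    then obtain T i j where "u \<in> T" "T \<subseteq> rook_cover q n m" "T = row_triple i j \<or> T = col_triple i j"
      unfolding rook_cover_def by blast
    with fin show "2 \<le> card {v \<in> rook_cover q n m. cart_adj K_adj K_adj u v}"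
      using two_neighbours_if_in_triple by blast
  qed
qed

lemma rook_total_2_dominating_upper:
  assumes "3 \<le> n" "n \<le> m"
  obtains S where "finite S" "total_k_dominating 2 (cart_verts (K_verts n) (K_verts m)) (cart_adj K_adj K_adj) S"
    and "2 * card S + 3 * n \<le> 6 * m + 27"
proof
  let ?q = "n div 4"
  show "finite (rook_cover ?q n m)"
    by (simp add: rook_cover_def row_triple_def col_triple_def)
  show "total_k_dominating 2 (cart_verts (K_verts n) (K_verts m)) (cart_adj K_adj K_adj) (rook_cover ?q n m)"
    using assms by (intro rook_cover_total_2_dominating) auto
  have "n \<le> 4 * ?q + 3" by simp
  then show "2 * card (rook_cover ?q n m) + 3 * n \<le> 6 * m + 27"
    using card_rook_cover_le[of ?q n m] assms(2) by linarith
qed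

lemma rook_gamma_2t_bounds:
  assumes "3 \<le> n" "n \<le> m"
  shows "3 * n \<le> 2 * gamma_kt 2 (cart_verts (K_verts n) (K_verts m)) (cart_adj K_adj K_adj)"
    and "2 * gamma_kt 2 (cart_verts (K_verts n) (K_verts m)) (cart_adj K_adj K_adj) + 3 * n \<le> 6 * m + 27"
proof -
  obtain S where S: "finite S" "total_k_dominating 2 (cart_verts (K_verts n) (K_verts m)) (cart_adj K_adj K_adj) S"
    and card_S: "2 * card S + 3 * n \<le> 6 * m + 27"
    using rook_total_2_dominating_upper[OF assms] .
  obtain S0 where "finite S0" "total_k_dominating 2 (cart_verts (K_verts n) (K_verts m)) (cart_adj K_adj K_adj) S0"
    and "card S0 = gamma_kt 2 (cart_verts (K_verts n) (K_verts m)) (cart_adj K_adj K_adj)"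
    using S by (rule gamma_kt_attained)
  then show "3 * n \<le> 2 * gamma_kt 2 (cart_verts (K_verts n) (K_verts m)) (cart_adj K_adj K_adj)"
    using rook_total_2_dominating_card_lower[OF _ assms(2)] by metis
  have "gamma_kt 2 (cart_verts (K_verts n) (K_verts m)) (cart_adj K_adj K_adj) \<le> card S"
    using S by (rule gamma_kt_le)
  with card_S show "2 * gamma_kt 2 (cart_verts (K_verts n) (K_verts m)) (cart_adj K_adj K_adj) + 3 * n \<le> 6 * m + 27"
    by linarith
qed

theorem theorem17:
  fixes k :: nat
  shows "(\<lambda>n. real (gamma_kt 2 (cart_verts (K_verts n) (K_verts (n + k))) (cart_adj K_adj K_adj)) / real n)
           \<longlonglongrightarrow> 3 / 2"
proof (rule LIMSEQ_div_of_affine_bounds)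
  let ?g = "\<lambda>n. gamma_kt 2 (cart_verts (K_verts n) (K_verts (n + k))) (cart_adj K_adj K_adj)"
  show "eventually (\<lambda>n. 3 / 2 * real n \<le> real (?g n) \<and> real (?g n) \<le> 3 / 2 * real n + (6 * k + 27) / 2) sequentially"
  proof (rule eventually_sequentiallyI)
    fix n :: nat assume "3 \<le> n"
    then have "real (3 * n) \<le> real (2 * ?g n)" "real (2 * ?g n + 3 * n) \<le> real (6 * (n + k) + 27)"
      using rook_gamma_2t_bounds[of n "n + k"] of_nat_le_iff by simp_all
    then show "3 / 2 * real n \<le> real (?g n) \<and> real (?g n) \<le> 3 / 2 * real n + (6 * k + 27) / 2"
      by (simp add: field_simps)
  qed
qed

end
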